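(* If $X$ is a locally compact Hausdorff space and $Y$ is an MG-space, then $X\times Y$ is an MG-space.
   Context: A space $X$ is Menger if for each sequence $(\mathcal{U}_n)$ of open covers of $X$ there is a sequence $(\mathcal{V}_n)$ with each $\mathcal{V}_n$ a finite subset of $\mathcal{U}_n$ and $\bigcup_{n}\bigcup\mathcal{V}_n=X$. A space $X$ is Menger generated (an MG-space) if a subset $U\subseteq X$ is open in $X$ whenever $U\cap M$ is open in $M$ for every Menger subspace $M$ of $X$. *)

theory Defs
  imports "HOL-Analysis.Analysis"
begin

definition open_cover_of :: "'a topology \<Rightarrow> 'a set set \<Rightarrow> bool" where
  "open_cover_of T \<U> \<longleftrightarrow> (\<forall>U\<in>\<U>. openin T U) \<and> \<Union>\<U> = topspace T"

definition Menger_space :: "'a topology \<Rightarrow> bool" where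
  "Menger_space T \<longleftrightarrow>
     (\<forall>\<U> :: nat \<Rightarrow> 'a set set. (\<forall>n. open_cover_of T (\<U> n)) \<longrightarrow>
        (\<exists>\<V> :: nat \<Rightarrow> 'a set set. (\<forall>n. finite (\<V> n) \<and> \<V> n \<subseteq> \<U> n) \<and>
             (\<Union>n. \<Union>(\<V> n)) = topspace T))"

definition MG_space :: "'a topology \<Rightarrow> bool" where
  "MG_space T \<longleftrightarrow>
     (\<forall>U \<subseteq> topspace T.
        (\<forall>M \<subseteq> topspace T. Menger_space (subtopology T M) \<longrightarrow> openin (subtopology T M) (U \<inter> M))
        \<longrightarrow> openin T U)"

end

theory Submission
  imports Defs
begin

text \<open>Let \<open>W \<subseteq> X \<times> Y\<close> have open traces on all Menger subspaces and let \<open>(x\<^sub>0, y\<^sub>0) \<in> W\<close>.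
  Compact sets are Menger, so \<open>W\<close> meets every compact set \<open>C \<times> {y\<^sub>0}\<close> in a relatively open
  set; by local compactness the slice \<open>{x. (x, y\<^sub>0) \<in> W}\<close> is therefore open, and as \<open>X\<close> is
  Hausdorff it contains a compact neighbourhood \<open>K\<close> of \<open>x\<^sub>0\<close>. The product of a compact space
  with a Menger space is Menger, so \<open>W\<close> also has open traces on all sets \<open>K \<times> M\<close> with \<open>M\<close>
  Menger in \<open>Y\<close>; the tube lemma then shows that \<open>{y. K \<times> {y} \<subseteq> W}\<close> has open traces on all
  Menger subspaces of \<open>Y\<close>, hence is open as \<open>Y\<close> is an MG-space. Its product with the
  interior of \<open>K\<close> is a neighbourhood of \<open>(x\<^sub>0, y\<^sub>0)\<close> inside \<open>W\<close>.\<close>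

lemma Menger_spaceI:
  fixes T :: "'a topology"
  assumes "\<And>\<U> :: nat \<Rightarrow> 'a set set. (\<And>n. open_cover_of T (\<U> n)) \<Longrightarrow>
      \<exists>\<V>. (\<forall>n. finite (\<V> n) \<and> \<V> n \<subseteq> \<U> n) \<and> topspace T \<subseteq> (\<Union>n. \<Union>(\<V> n))"
  shows "Menger_space T"
  unfolding Menger_space_def
proof (intro allI impI)
  fix \<U> :: "nat \<Rightarrow> 'a set set"
  assume cov: "\<forall>n. open_cover_of T (\<U> n)"
  have "\<exists>\<V>. (\<forall>n. finite (\<V> n) \<and> \<V> n \<subseteq> \<U> n) \<and> topspace T \<subseteq> (\<Union>n. \<Union>(\<V> n))"
    by (rule assms) (use cov in blast)
  then obtain \<V> where \<V>: "\<forall>n. finite (\<V> n) \<and> \<V> n \<subseteq> \<U> n" "topspace T \<subseteq> (\<Union>n. \<Union>(\<V> n))"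
    by blast
  moreover have "(\<Union>n. \<Union>(\<V> n)) \<subseteq> topspace T"
    using cov \<V>(1) unfolding open_cover_of_def by blast
  ultimately show "\<exists>\<V>. (\<forall>n. finite (\<V> n) \<and> \<V> n \<subseteq> \<U> n) \<and> (\<Union>n. \<Union>(\<V> n)) = topspace T"
    by blast
qed

lemma compact_space_imp_Menger_space:
  assumes "compact_space T"
  shows "Menger_space T"
proof (rule Menger_spaceI)
  fix \<U> :: "nat \<Rightarrow> 'a set set"
  assume "\<And>n. open_cover_of T (\<U> n)"
  then have "\<forall>n. \<exists>\<F>. finite \<F> \<and> \<F> \<subseteq> \<U> n \<and> \<Union>\<F> = topspace T"
    using assms by (simp add: compact_space open_cover_of_def)
  then obtain \<V> where \<V>: "\<And>n. finite (\<V> n) \<and> \<V> n \<subseteq> \<U> n \<and> \<Union>(\<V> n) = topspace T"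
    by metis
  show "\<exists>\<V>. (\<forall>n. finite (\<V> n) \<and> \<V> n \<subseteq> \<U> n) \<and> topspace T \<subseteq> (\<Union>n. \<Union>(\<V> n))"
  proof (intro exI conjI)
    show "\<forall>n. finite (\<V> n) \<and> \<V> n \<subseteq> \<U> n"
      using \<V> by blast
    show "topspace T \<subseteq> (\<Union>n. \<Union>(\<V> n))"
      using \<V>[of 0] by blast
  qed
qed

lemma Menger_space_subtopology_compactin:
  "compactin T K \<Longrightarrow> Menger_space (subtopology T K)"
  by (simp add: compact_space_imp_Menger_space compact_space_subtopology)

lemma open_cover_of_finitely_covered_tubes:
  assumes A: "compact_space A" and cov: "open_cover_of (prod_topology A B) \<U>"
  shows "open_cover_of B {Q. openin B Q \<and> (\<exists>\<F>. finite \<F> \<and> \<F> \<subseteq> \<U> \<and> topspace A \<times> Q \<subseteq> \<Union>\<F>)}"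
    (is "open_cover_of B ?tubes")
proof -
  have open_\<U>: "\<And>U. U \<in> \<U> \<Longrightarrow> openin (prod_topology A B) U"
    using cov by (simp add: open_cover_of_def)
  have "topspace B \<subseteq> \<Union>?tubes"
  proof
    fix y assume y: "y \<in> topspace B"
    have "compactin (prod_topology A B) (topspace A \<times> {y})"
      using A y by (simp add: compactin_Times compact_space_def)
    moreover have "topspace A \<times> {y} \<subseteq> \<Union>\<U>"
      using cov y by (auto simp: open_cover_of_def)
    ultimately obtain \<F> where \<F>: "finite \<F>" "\<F> \<subseteq> \<U>" "topspace A \<times> {y} \<subseteq> \<Union>\<F>"
      using compactinD open_\<U> by metis
    have "openin (prod_topology A B) (\<Union>\<F>)"
      using \<F>(2) open_\<U> by (intro openin_Union) blast
    moreover have "compactin A (topspace A)"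
      using A by (simp add: compact_space_def)
    ultimately have "\<exists>U Q. openin A U \<and> openin B Q \<and> topspace A \<subseteq> U \<and> y \<in> Q \<and> U \<times> Q \<subseteq> \<Union>\<F>"
      using y \<F>(3) by (rule tube_lemma_left)
    then obtain U Q where "openin B Q" "y \<in> Q" "topspace A \<subseteq> U" "U \<times> Q \<subseteq> \<Union>\<F>"
      by blast
    then have "topspace A \<times> Q \<subseteq> \<Union>\<F>"
      by (meson Sigma_mono order_refl order_trans)
    with \<F>(1,2) \<open>openin B Q\<close> \<open>y \<in> Q\<close> show "y \<in> \<Union>?tubes"
      by blast
  qed
  then show ?thesis
    unfolding open_cover_of_def by (blast dest: openin_subset)
qed

lemma Menger_space_prod_topology_compact:
  assumes A: "compact_space A" and B: "Menger_space B"
  shows "Menger_space (prod_topology A B)"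
proof (rule Menger_spaceI)
  fix \<U> :: "nat \<Rightarrow> ('a \<times> 'b) set set"
  assume cov: "\<And>n. open_cover_of (prod_topology A B) (\<U> n)"
  define tubes where
    "tubes n = {Q. openin B Q \<and> (\<exists>\<F>. finite \<F> \<and> \<F> \<subseteq> \<U> n \<and> topspace A \<times> Q \<subseteq> \<Union>\<F>)}" for n
  have "open_cover_of B (tubes n)" for n
    unfolding tubes_def by (rule open_cover_of_finitely_covered_tubes[OF A cov])
  then have "\<exists>\<Q>. (\<forall>n. finite (\<Q> n) \<and> \<Q> n \<subseteq> tubes n) \<and> (\<Union>n. \<Union>(\<Q> n)) = topspace B"
    using B unfolding Menger_space_def by blast
  then obtain \<Q> where \<Q>: "\<And>n. finite (\<Q> n) \<and> \<Q> n \<subseteq> tubes n"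
    and cover_B: "(\<Union>n. \<Union>(\<Q> n)) = topspace B"
    by meson
  have "\<forall>n Q. Q \<in> tubes n \<longrightarrow>
      (\<exists>\<F>. finite \<F> \<and> \<F> \<subseteq> \<U> n \<and> topspace A \<times> Q \<subseteq> \<Union>\<F>)"
    by (simp add: tubes_def)
  then obtain \<F> where \<F>: "\<And>n Q. Q \<in> tubes n \<Longrightarrow>
      finite (\<F> n Q) \<and> \<F> n Q \<subseteq> \<U> n \<and> topspace A \<times> Q \<subseteq> \<Union>(\<F> n Q)"
    by metis
  show "\<exists>\<V>. (\<forall>n. finite (\<V> n) \<and> \<V> n \<subseteq> \<U> n) \<and>
      topspace (prod_topology A B) \<subseteq> (\<Union>n. \<Union>(\<V> n))"
  proof (intro exI[of _ "\<lambda>n. \<Union>(\<F> n ` \<Q> n)"] conjI allI)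
    fix n
    have "\<forall>Q \<in> \<Q> n. finite (\<F> n Q) \<and> \<F> n Q \<subseteq> \<U> n"
      using \<Q>[of n] \<F> by blast
    then show "finite (\<Union>(\<F> n ` \<Q> n))" "\<Union>(\<F> n ` \<Q> n) \<subseteq> \<U> n"
      using \<Q>[of n] by auto
  next
    show "topspace (prod_topology A B) \<subseteq> (\<Union>n. \<Union>(\<Union>(\<F> n ` \<Q> n)))"
    proof
      fix p assume "p \<in> topspace (prod_topology A B)"
      then obtain a b where p: "p = (a, b)" "a \<in> topspace A" "b \<in> topspace B"
        by auto
      then have "b \<in> (\<Union>n. \<Union>(\<Q> n))"
        by (simp add: cover_B)
      then obtain n Q where Q: "Q \<in> \<Q> n" "b \<in> Q"
        by blast
      then have "(a, b) \<in> \<Union>(\<F> n Q)"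
        using \<Q> \<F> p(2) by blast
      with Q p(1) show "p \<in> (\<Union>n. \<Union>(\<Union>(\<F> n ` \<Q> n)))"
        by blast
    qed
  qed
qed

definition Menger_openin :: "'a topology \<Rightarrow> 'a set \<Rightarrow> bool" where
  "Menger_openin T U \<longleftrightarrow>
     (\<forall>M \<subseteq> topspace T. Menger_space (subtopology T M) \<longrightarrow> openin (subtopology T M) (U \<inter> M))"

lemma MG_space_Menger_openin:
  "MG_space T \<longleftrightarrow> (\<forall>U \<subseteq> topspace T. Menger_openin T U \<longrightarrow> openin T U)"
  by (simp add: MG_space_def Menger_openin_def)

lemma MG_spaceD:
  "\<lbrakk>MG_space T; U \<subseteq> topspace T; Menger_openin T U\<rbrakk> \<Longrightarrow> openin T U"
  by (simp add: MG_space_Menger_openin)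

lemma Menger_openin_trace:
  assumes "Menger_openin T U" "M \<subseteq> topspace T" "Menger_space (subtopology T M)"
  obtains S where "openin T S" "U \<inter> M = S \<inter> M"
  using assms by (auto simp: Menger_openin_def openin_subtopology)

lemma openin_slice_prod_topology:
  assumes "openin (prod_topology X Y) T" "y \<in> topspace Y"
  shows "openin X {x \<in> topspace X. (x, y) \<in> T}"
proof (rule openin_continuous_map_preimage)
  show "continuous_map X (prod_topology X Y) (\<lambda>x. (x, y))"
    using assms(2) by (intro continuous_map_pairedI continuous_map_id[unfolded id_def]) simp
qed (rule assms(1))

lemma openin_slice_Menger_openin:
  assumes X: "locally_compact_space X" and W: "Menger_openin (prod_topology X Y) W"
    and y: "y \<in> topspace Y"
  shows "openin X {x \<in> topspace X. (x, y) \<in> W}" (is "openin X ?S")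
  unfolding openin_subopen[of _ ?S]
proof
  fix x assume x: "x \<in> ?S"
  then obtain U C where UC: "openin X U" "compactin X C" "x \<in> U" "U \<subseteq> C"
    using X unfolding locally_compact_space_def by blast
  have C: "compactin (prod_topology X Y) (C \<times> {y})"
    using UC(2) y by (simp add: compactin_Times)
  obtain T where T: "openin (prod_topology X Y) T" and W_T: "W \<inter> (C \<times> {y}) = T \<inter> (C \<times> {y})"
    by (rule Menger_openin_trace[OF W compactin_subset_topspace[OF C]
          Menger_space_subtopology_compactin[OF C]])
  have "(x', y) \<in> W \<longleftrightarrow> (x', y) \<in> T" if "x' \<in> U" for x'
  proof -
    have "(x', y) \<in> C \<times> {y}"
      using that UC(4) by blast
    then show ?thesis
      using W_T by (metis Int_iff)
  qed
  then have "?S \<inter> U = {x' \<in> topspace X. (x', y) \<in> T} \<inter> U"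
    by blast
  moreover have "openin X ({x' \<in> topspace X. (x', y) \<in> T} \<inter> U)"
    using openin_slice_prod_topology[OF T y] UC(1) by (rule openin_Int)
  ultimately have "openin X (?S \<inter> U)"
    by simp
  with x UC(3) show "\<exists>V. openin X V \<and> x \<in> V \<and> V \<subseteq> ?S"
    by blast
qed

lemma openin_tubes_compactin:
  assumes T: "openin (prod_topology X Y) T" and K: "compactin X K"
  shows "openin Y {y \<in> topspace Y. K \<times> {y} \<subseteq> T}" (is "openin Y ?V")
  unfolding openin_subopen[of _ ?V]
proof
  fix y assume "y \<in> ?V"
  then have "\<exists>U N. openin X U \<and> openin Y N \<and> K \<subseteq> U \<and> y \<in> N \<and> U \<times> N \<subseteq> T"
    using tube_lemma_left[OF T K] by simp
  then obtain U N where N: "openin Y N" "K \<subseteq> U" "y \<in> N" "U \<times> N \<subseteq> T"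
    by blast
  then have "N \<subseteq> ?V"
    using openin_subset by blast
  with N(1,3) show "\<exists>N. openin Y N \<and> y \<in> N \<and> N \<subseteq> ?V"
    by blast
qed

lemma Menger_openin_tubes:
  assumes W: "Menger_openin (prod_topology X Y) W" and K: "compactin X K"
  shows "Menger_openin Y {y \<in> topspace Y. K \<times> {y} \<subseteq> W}"
  unfolding Menger_openin_def
proof (intro allI impI)
  fix M assume M: "M \<subseteq> topspace Y" "Menger_space (subtopology Y M)"
  have KM: "Menger_space (subtopology (prod_topology X Y) (K \<times> M))"
    unfolding subtopology_Times
    using Menger_space_prod_topology_compact[OF compact_space_subtopology[OF K] M(2)] .
  have "K \<times> M \<subseteq> topspace (prod_topology X Y)"
    using compactin_subset_topspace[OF K] M(1) by auto
  then obtain T where T: "openin (prod_topology X Y) T"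
    and W_T: "W \<inter> (K \<times> M) = T \<inter> (K \<times> M)"
    by (rule Menger_openin_trace[OF W _ KM])
  have "K \<times> {y} \<subseteq> W \<longleftrightarrow> K \<times> {y} \<subseteq> T" if "y \<in> M" for y
  proof -
    have "K \<times> {y} \<subseteq> K \<times> M"
      using that by blast
    then show ?thesis
      using W_T by (metis le_inf_iff)
  qed
  then have "{y \<in> topspace Y. K \<times> {y} \<subseteq> W} \<inter> M = {y \<in> topspace Y. K \<times> {y} \<subseteq> T} \<inter> M"
    by blast
  then show "openin (subtopology Y M) ({y \<in> topspace Y. K \<times> {y} \<subseteq> W} \<inter> M)"
    using openin_subtopology_Int[OF openin_tubes_compactin[OF T K]] by simp
qed

theorem proposition4p22:
  fixes X :: "'a topology" and Y :: "'b topology"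
  assumes "locally_compact_space X" and "Hausdorff_space X" and "MG_space Y"
  shows "MG_space (prod_topology X Y)"
  unfolding MG_space_Menger_openin
proof (intro allI impI)
  fix W assume "W \<subseteq> topspace (prod_topology X Y)" and W: "Menger_openin (prod_topology X Y) W"
  show "openin (prod_topology X Y) W"
    unfolding openin_subopen[of _ W]
  proof clarify
    fix x y assume xy: "(x, y) \<in> W"
    with \<open>W \<subseteq> _\<close> have x: "x \<in> topspace X" and y: "y \<in> topspace Y"
      by auto
    define S where "S = {x' \<in> topspace X. (x', y) \<in> W}"
    have "neighbourhood_base_of (compactin X) X"
      using assms(1,2) locally_compact_space_neighbourhood_base by blast
    moreover have "openin X S" "x \<in> S"
      using openin_slice_Menger_openin[OF assms(1) W y] x xy by (auto simp: S_def)
    ultimately obtain U K where UK: "openin X U" "compactin X K" "x \<in> U" "U \<subseteq> K" "K \<subseteq> S"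
      unfolding neighbourhood_base_of by meson
    let ?V = "{y' \<in> topspace Y. K \<times> {y'} \<subseteq> W}"
    have "openin (prod_topology X Y) (U \<times> ?V)"
      using UK(1) MG_spaceD[OF assms(3) _ Menger_openin_tubes[OF W UK(2)]]
      by (simp add: openin_prod_Times_iff)
    moreover have "(x, y) \<in> U \<times> ?V" "U \<times> ?V \<subseteq> W"
      using UK y by (auto simp: S_def)
    ultimately show "\<exists>T. openin (prod_topology X Y) T \<and> (x, y) \<in> T \<and> T \<subseteq> W"
      by blast
  qed
qed

end
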